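(* Let $q$ be a root of unity with $q^4\ne1$ and let $\rho$ be a type-$0$ representation with parameters $\sigma$ (general), $w$, $(\vec s,\vec t)\in E^0_{\sigma,w}$. (1) If $\Pi_s=\Pi_t=0$ and $r_i(\sigma,w)=r_j(\sigma,w)=0$ for some $i\neq j$ in $\mathbb Z/D$, then $\rho$ is reducible. (2) If moreover $z_0=\sigma^D+\sigma^{-D}\neq\pm2$, the converse holds: $\rho$ reducible implies $\Pi_s=\Pi_t=0$ and $r_i=r_j=0$ for some $i\ne j$.
   Context: $\mathcal S_q(\Sigma_{1,1})$ is the Kauffman bracket skein algebra of the one-punctured torus, generated by the slope $0,1,\infty$ curves $\alpha_0,\alpha_1,\alpha_\infty$. For $q$ a root of unity: $n=\mathrm{ord}(q^2)$, $D=n$. For $\sigma\in\mathbb C^\times$: $z_0=\sigma^D+\sigma^{-D}$, $\lambda_i=q^{2i}\sigma+q^{-2i}\sigma^{-1}$, $\hat\lambda_i=q^{2i}\sigma-q^{-2i}\sigma^{-1}$ ($i\in\mathbb Z/D$); $\sigma$ is general if $z_0\ne\pm2$ or ($z_0=-2$ and $n$ even). $r_i(\sigma,w)=\frac{w+q^{4i+2}\sigma^2+q^{-4i-2}\sigma^{-2}}{\hat\lambda_i\hat\lambda_{i+1}}$, $E^0_{\sigma,w}=\{(\vec s,\vec t)\in\mathbb C^{2D}:s_it_i=r_i(\sigma,w)\}$, $\Pi_s=\prod_i s_i$, $\Pi_t=\prod_it_i$. The type-$0$ representation: $V$ with basis $\{v_i\}_{i\in\mathbb Z/D}$, $\rho(\alpha_0)v_i=\lambda_iv_i$,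 $\rho(\alpha_1)v_i=q^{2i+1}\sigma s_iv_{i+1}+q^{-2i+1}\sigma^{-1}t_{i-1}v_{i-1}$, $\rho(\alpha_\infty)v_i=s_iv_{i+1}+t_{i-1}v_{i-1}$; this is a representation of $\mathcal S_q(\Sigma_{1,1})$. *)

theory Defs
  imports Complex_Main
begin

text \<open>Vectors of V = span of v_0..v_{D-1} are represented as functions nat => complex
  vanishing outside {..<D}; v_i is the i-th coordinate vector. Indices are read mod D.\<close>

definition root_of_unity :: "complex \<Rightarrow> bool" where
  "root_of_unity q \<longleftrightarrow> (\<exists>m::nat. m > 0 \<and> q ^ m = 1)"

definition ordD :: "complex \<Rightarrow> nat" where
  "ordD q = (LEAST k::nat. k > 0 \<and> (q^2) ^ k = 1)"

definition z0 :: "complex \<Rightarrow> complex \<Rightarrow> complex" where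
  "z0 q \<sigma> = \<sigma> ^ ordD q + inverse (\<sigma> ^ ordD q)"

definition lam :: "complex \<Rightarrow> complex \<Rightarrow> nat \<Rightarrow> complex" where
  "lam q \<sigma> i = q ^ (2*i) * \<sigma> + inverse (q ^ (2*i)) * inverse \<sigma>"

definition lamhat :: "complex \<Rightarrow> complex \<Rightarrow> nat \<Rightarrow> complex" where
  "lamhat q \<sigma> i = q ^ (2*i) * \<sigma> - inverse (q ^ (2*i)) * inverse \<sigma>"

definition general :: "complex \<Rightarrow> complex \<Rightarrow> bool" where
  "general q \<sigma> \<longleftrightarrow> (z0 q \<sigma> \<noteq> 2 \<and> z0 q \<sigma> \<noteq> -2) \<or> (z0 q \<sigma> = -2 \<and> even (ordD q))"

definition rr :: "complex \<Rightarrow> complex \<Rightarrow> complex \<Rightarrow> nat \<Rightarrow> complex" where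
  "rr q \<sigma> w i = (w + q ^ (4*i+2) * \<sigma>^2 + inverse (q ^ (4*i+2) * \<sigma>^2))
      / (lamhat q \<sigma> i * lamhat q \<sigma> (i+1))"

definition inE0 :: "complex \<Rightarrow> complex \<Rightarrow> complex \<Rightarrow> (nat \<Rightarrow> complex) \<Rightarrow> (nat \<Rightarrow> complex) \<Rightarrow> bool" where
  "inE0 q \<sigma> w s t \<longleftrightarrow> (\<forall>i < ordD q. s i * t i = rr q \<sigma> w i)"

definition Vsp :: "nat \<Rightarrow> (nat \<Rightarrow> complex) set" where
  "Vsp D = {f. \<forall>i. D \<le> i \<longrightarrow> f i = 0}"

definition bv :: "nat \<Rightarrow> nat \<Rightarrow> complex" where
  "bv i = (\<lambda>j. if j = i then 1 else 0)"

definition nxt :: "nat \<Rightarrow> nat \<Rightarrow> nat" where "nxt D i = (i + 1) mod D"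
definition prv :: "nat \<Rightarrow> nat \<Rightarrow> nat" where "prv D i = (i + D - 1) mod D"

definition linext :: "nat \<Rightarrow> (nat \<Rightarrow> nat \<Rightarrow> complex) \<Rightarrow> (nat \<Rightarrow> complex) \<Rightarrow> nat \<Rightarrow> complex" where
  "linext D img f = (\<lambda>j. \<Sum>i<D. f i * img i j)"

definition rho0 :: "complex \<Rightarrow> complex \<Rightarrow> (nat \<Rightarrow> complex) \<Rightarrow> nat \<Rightarrow> complex" where
  "rho0 q \<sigma> = linext (ordD q) (\<lambda>i j. lam q \<sigma> i * bv i j)"

definition rho1 :: "complex \<Rightarrow> complex \<Rightarrow> (nat \<Rightarrow> complex) \<Rightarrow> (nat \<Rightarrow> complex) \<Rightarrow> (nat \<Rightarrow> complex) \<Rightarrow> nat \<Rightarrow> complex" where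
  "rho1 q \<sigma> s t = linext (ordD q) (\<lambda>i j.
      q ^ (2*i+1) * \<sigma> * s i * bv (nxt (ordD q) i) j
      + q powi (1 - 2 * int i) * inverse \<sigma> * t (prv (ordD q) i) * bv (prv (ordD q) i) j)"

definition rhoinf :: "complex \<Rightarrow> (nat \<Rightarrow> complex) \<Rightarrow> (nat \<Rightarrow> complex) \<Rightarrow> (nat \<Rightarrow> complex) \<Rightarrow> nat \<Rightarrow> complex" where
  "rhoinf q s t = linext (ordD q) (\<lambda>i j.
      s i * bv (nxt (ordD q) i) j + t (prv (ordD q) i) * bv (prv (ordD q) i) j)"

definition lin_subspace :: "(nat \<Rightarrow> complex) set \<Rightarrow> bool" where
  "lin_subspace W \<longleftrightarrow> (\<lambda>_. 0) \<in> W \<and> (\<forall>f\<in>W. \<forall>g\<in>W. (\<lambda>j. f j + g j) \<in> W)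
      \<and> (\<forall>c. \<forall>f\<in>W. (\<lambda>j. c * f j) \<in> W)"

definition reducible_type0 :: "complex \<Rightarrow> complex \<Rightarrow> (nat \<Rightarrow> complex) \<Rightarrow> (nat \<Rightarrow> complex) \<Rightarrow> bool" where
  "reducible_type0 q \<sigma> s t \<longleftrightarrow> (\<exists>W. lin_subspace W \<and> W \<subseteq> Vsp (ordD q)
      \<and> W \<noteq> {\<lambda>_. 0} \<and> W \<noteq> Vsp (ordD q)
      \<and> (\<forall>f\<in>W. rho0 q \<sigma> f \<in> W \<and> rho1 q \<sigma> s t f \<in> W \<and> rhoinf q s t f \<in> W))"

end

theory Submission
  imports Defs
begin

text \<open>
  If \<open>z\<^sub>0 \<noteq> \<plusminus>2\<close>, the eigenvalues \<open>\<lambda>\<^sub>i\<close> of \<open>\<rho>(\<alpha>\<^sub>0)\<close> are pairwise distinct, so every invariant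
  subspace is spanned by the basis vectors \<open>v\<^sub>i\<close> with \<open>i\<close> in some index set \<open>S\<close>. Such a span is
  invariant under \<open>\<rho>(\<alpha>\<^sub>\<infinity>)\<close> (and then also under \<open>\<rho>(\<alpha>\<^sub>1)\<close>) exactly when \<open>s\<^sub>i = 0\<close> whenever \<open>S\<close> is
  left at \<open>i\<close> going forward around \<open>\<int>/D\<close>, and \<open>t\<^sub>i = 0\<close> whenever \<open>S\<close> is entered at \<open>i + 1\<close>.
  A nonempty proper \<open>S\<close> is left and entered somewhere, at different places, giving
  \<open>s\<^sub>a = t\<^sub>b = 0\<close> with \<open>a \<noteq> b\<close>; conversely such \<open>a, b\<close> make the cyclic interval
  \<open>{b + 1, \<dots>, a}\<close> closed. Since \<open>s\<^sub>i t\<^sub>i = r\<^sub>i\<close>, the existence of such \<open>a \<noteq> b\<close> is equivalent to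
  \<open>\<Pi>\<^sub>s = \<Pi>\<^sub>t = 0\<close> together with two distinct zeros of \<open>r\<close>.
\<close>

lemma mod_eq_if_less_double:
  fixes x D :: nat
  assumes "x < 2 * D"
  shows "x mod D = (if x < D then x else x - D)"
proof (cases "x < D")
  case False
  then have "x mod D = (x - D) mod D" by (simp add: le_mod_geq)
  then show ?thesis using assms False by simp
qed simp

lemma nxt_less: "0 < D \<Longrightarrow> nxt D i < D"
  by (simp add: nxt_def)

lemma prv_less: "0 < D \<Longrightarrow> prv D i < D"
  by (simp add: prv_def)

lemma prv_nxt:
  assumes "i < D"
  shows "prv D (nxt D i) = i"
proof (cases "i + 1 < D")
  case True
  then show ?thesis by (simp add: nxt_def prv_def)
next
  case False
  then have "i + 1 = D" using assms by linarith
  then show ?thesis by (simp add: nxt_def prv_def)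
qed

lemma nxt_neq_prv:
  assumes "3 \<le> D" "i < D"
  shows "nxt D i \<noteq> prv D i"
proof -
  have "(i + 1) mod D = (if i + 1 < D then i + 1 else i + 1 - D)"
    "(i + D - 1) mod D = (if i + D - 1 < D then i + D - 1 else i + D - 1 - D)"
    using assms by (intro mod_eq_if_less_double; simp)+
  then show ?thesis unfolding nxt_def prv_def using assms by auto
qed

lemma exists_exit_nxt:
  assumes "i < D" "i \<in> S" "j < D" "j \<notin> S"
  shows "\<exists>k<D. k \<in> S \<and> nxt D k \<notin> S"
proof (rule ccontr)
  assume "\<not> ?thesis"
  then have closed: "k < D \<Longrightarrow> k \<in> S \<Longrightarrow> nxt D k \<in> S" for k by blast
  have "(i + m) mod D \<in> S" for m
  proof (induction m)
    case 0
    show ?case using assms(1,2) by simp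
  next
    case (Suc m)
    have "nxt D ((i + m) mod D) = (i + Suc m) mod D"
      unfolding nxt_def by (simp add: mod_simps)
    then show ?case using closed[OF _ Suc] assms(1) by (metis mod_less_divisor gr_implies_not0 neq0_conv)
  qed
  from this[of "j + D - i"] have "j \<in> S" using assms(1,3) by simp
  then show False using assms(4) by simp
qed

lemma root_of_unity_nonzero: "root_of_unity q \<Longrightarrow> q \<noteq> 0"
  unfolding root_of_unity_def by (metis power_0_left zero_neq_one less_not_refl)

lemma ordD_pos_power_eq_1:
  assumes "root_of_unity q"
  shows "0 < ordD q \<and> (q\<^sup>2) ^ ordD q = 1"
proof -
  obtain m :: nat where "0 < m" "q ^ m = 1"
    using assms unfolding root_of_unity_def by blast
  then have "\<exists>k::nat. 0 < k \<and> (q\<^sup>2) ^ k = 1"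
    by (metis power_mult mult.commute power_one)
  then show ?thesis unfolding ordD_def by (rule LeastI_ex)
qed

lemma power_neq_1_below_ordD: "0 < k \<Longrightarrow> k < ordD q \<Longrightarrow> (q\<^sup>2) ^ k \<noteq> 1"
  unfolding ordD_def using not_less_Least by blast

lemma three_le_ordD:
  assumes "root_of_unity q" "q ^ 4 \<noteq> 1"
  shows "3 \<le> ordD q"
proof (rule ccontr)
  have ord: "0 < ordD q" "(q\<^sup>2) ^ ordD q = 1"
    using ordD_pos_power_eq_1[OF assms(1)] by auto
  assume "\<not> 3 \<le> ordD q"
  then have "ordD q = 1 \<or> ordD q = 2"
    using ord(1) by linarith
  then have "ordD q dvd 2" by auto
  then obtain c where "2 = ordD q * c" ..
  then have "(q\<^sup>2)\<^sup>2 = 1"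
    using ord(2) by (metis power_mult power_one)
  then have "q ^ 4 = 1"
    by (metis power_mult num_double numeral_times_numeral)
  with assms(2) show False ..
qed

lemma power_double_eq_power_shift:
  fixes x :: "'a::monoid_mult"
  assumes "i \<le> j"
  shows "x ^ (2 * j) = x ^ (2 * i) * (x\<^sup>2) ^ (j - i)"
proof -
  have "2 * j = 2 * i + 2 * (j - i)" using assms by simp
  then show ?thesis by (metis power_add power_mult)
qed

lemma power_double_inj_below_ordD:
  assumes "q \<noteq> 0" "i < ordD q" "j < ordD q" "q ^ (2 * i) = q ^ (2 * j)"
  shows "i = j"
proof (rule ccontr)
  assume "i \<noteq> j"
  then obtain k l where kl: "k < l" "l < ordD q" "q ^ (2 * k) = q ^ (2 * l)"
    using assms(2-4) by (metis linorder_neqE_nat)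
  then have "(q\<^sup>2) ^ (l - k) = 1"
    using assms(1) power_double_eq_power_shift[of k l q] by simp
  moreover have "(q\<^sup>2) ^ (l - k) \<noteq> 1"
    using kl by (intro power_neq_1_below_ordD) auto
  ultimately show False by contradiction
qed

lemma add_inverse_eq_add_inverseD:
  fixes a b :: "'a::field"
  assumes "a \<noteq> 0" "b \<noteq> 0" "a + inverse a = b + inverse b"
  shows "a = b \<or> a * b = 1"
proof -
  have "(a - b) * (a * b - 1) = a * b * ((a + inverse a) - (b + inverse b))"
    using assms(1,2) by (simp add: field_simps)
  then show ?thesis using assms(3) by simp
qed

lemma power_ordD_eq_1_or_minus_1:
  assumes "root_of_unity q" "(q\<^sup>2) ^ k * \<sigma>\<^sup>2 = 1"
  shows "\<sigma> ^ ordD q = 1 \<or> \<sigma> ^ ordD q = -1"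
proof -
  let ?D = "ordD q"
  have "((q\<^sup>2) ^ k) ^ ?D * (\<sigma>\<^sup>2) ^ ?D = 1"
    using assms(2) by (metis power_mult_distrib power_one)
  moreover have "((q\<^sup>2) ^ k) ^ ?D = ((q\<^sup>2) ^ ?D) ^ k"
    by (metis power_mult mult.commute)
  moreover have "(\<sigma>\<^sup>2) ^ ?D = (\<sigma> ^ ?D)\<^sup>2"
    by (metis power_mult mult.commute)
  ultimately have "(\<sigma> ^ ?D)\<^sup>2 = 1" using ordD_pos_power_eq_1[OF assms(1)] by simp
  then show ?thesis by (simp add: power2_eq_1_iff)
qed

lemma lam_inj_on:
  assumes q: "root_of_unity q" and \<sigma>: "\<sigma> \<noteq> 0"
    and z0: "z0 q \<sigma> \<noteq> 2" "z0 q \<sigma> \<noteq> -2"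
  shows "inj_on (lam q \<sigma>) {..<ordD q}"
proof (rule inj_onI)
  fix i j assume i: "i \<in> {..<ordD q}" and j: "j \<in> {..<ordD q}"
    and eq: "lam q \<sigma> i = lam q \<sigma> j"
  have q0: "q \<noteq> 0" using q by (rule root_of_unity_nonzero)
  define a where "a = q ^ (2 * i) * \<sigma>"
  define b where "b = q ^ (2 * j) * \<sigma>"
  have "a \<noteq> 0" "b \<noteq> 0" using q0 \<sigma> by (auto simp: a_def b_def)
  moreover have "a + inverse a = b + inverse b"
    using eq by (simp add: lam_def a_def b_def inverse_mult_distrib)
  ultimately have "a = b \<or> a * b = 1" by (rule add_inverse_eq_add_inverseD)
  then show "i = j"
  proof
    assume "a = b"
    then show "i = j"
      using \<sigma> q0 i j power_double_inj_below_ordD[of q i j] by (simp add: a_def b_def)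
  next
    assume "a * b = 1"
    moreover have "q ^ (2 * i) * q ^ (2 * j) = (q\<^sup>2) ^ (i + j)"
      by (metis distrib_left power_add power_mult)
    ultimately have "(q\<^sup>2) ^ (i + j) * \<sigma>\<^sup>2 = 1"
      by (simp add: a_def b_def power2_eq_square algebra_simps)
    then have "\<sigma> ^ ordD q = 1 \<or> \<sigma> ^ ordD q = -1" by (rule power_ordD_eq_1_or_minus_1[OF q])
    then show "i = j" using z0 by (auto simp: z0_def)
  qed
qed

lemma lin_subspace_add: "lin_subspace W \<Longrightarrow> f \<in> W \<Longrightarrow> g \<in> W \<Longrightarrow> (\<lambda>j. f j + g j) \<in> W"
  unfolding lin_subspace_def by auto

lemma lin_subspace_smult: "lin_subspace W \<Longrightarrow> f \<in> W \<Longrightarrow> (\<lambda>j. c * f j) \<in> W"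
  unfolding lin_subspace_def by auto

lemma lin_subspace_sum:
  assumes "lin_subspace W" "finite K" "\<forall>i\<in>K. g i \<in> W"
  shows "(\<lambda>m. \<Sum>i\<in>K. c i * g i m) \<in> W"
  using assms(2,3)
proof induct
  case empty
  then show ?case using assms(1) by (simp add: lin_subspace_def)
next
  case (insert x F)
  then have "(\<lambda>m. c x * g x m + (\<Sum>i\<in>F. c i * g i m)) \<in> W"
    using lin_subspace_add[OF assms(1)] lin_subspace_smult[OF assms(1)] by simp
  then show ?case using insert by simp
qed

lemma Vsp_eq_sum_bv: "f \<in> Vsp D \<Longrightarrow> f = (\<lambda>m. \<Sum>i<D. f i * bv i m)"
  unfolding Vsp_def bv_def by (rule ext) (auto simp: if_distrib cong: if_cong)

lemma bv_mem_Vsp_iff: "bv i \<in> Vsp D \<longleftrightarrow> i < D"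
  unfolding Vsp_def bv_def by (auto simp: not_less)

definition coord_subspace :: "nat \<Rightarrow> nat set \<Rightarrow> (nat \<Rightarrow> complex) set" where
  "coord_subspace D S = {f \<in> Vsp D. \<forall>m. m \<notin> S \<longrightarrow> f m = 0}"

lemma lin_subspace_coord_subspace: "lin_subspace (coord_subspace D S)"
  unfolding lin_subspace_def coord_subspace_def Vsp_def by auto

lemma bv_mem_coord_subspace: "i \<in> S \<Longrightarrow> i < D \<Longrightarrow> bv i \<in> coord_subspace D S"
  unfolding coord_subspace_def Vsp_def bv_def by auto

lemma coord_subspace_empty: "coord_subspace D {} = {\<lambda>_. 0}"
  unfolding coord_subspace_def Vsp_def by auto

lemma coord_subspace_eq_Vsp: "{..<D} \<subseteq> S \<Longrightarrow> coord_subspace D S = Vsp D"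
  unfolding coord_subspace_def Vsp_def by (auto simp: subset_iff) (meson lessThan_iff not_less)

lemma smult_bv_mem_coord_subspace:
  "c = 0 \<or> k \<in> S \<Longrightarrow> k < D \<Longrightarrow> (\<lambda>j. c * bv k j) \<in> coord_subspace D S"
  unfolding coord_subspace_def Vsp_def bv_def by auto

lemma coord_subspace_subset:
  assumes "lin_subspace W" "\<forall>i\<in>S. bv i \<in> W"
  shows "coord_subspace D S \<subseteq> W"
proof
  fix f assume f: "f \<in> coord_subspace D S"
  have "(\<Sum>i<D. f i * bv i m) = (\<Sum>i\<in>{..<D} \<inter> S. f i * bv i m)" for m
    using f by (intro sum.mono_neutral_right) (auto simp: coord_subspace_def)
  then have "f = (\<lambda>m. \<Sum>i\<in>{..<D} \<inter> S. f i * bv i m)"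
    using Vsp_eq_sum_bv[of f D] f by (simp add: coord_subspace_def)
  also have "\<dots> \<in> W" using assms by (intro lin_subspace_sum) auto
  finally show "f \<in> W" .
qed

lemma rho0_apply: "f \<in> Vsp (ordD q) \<Longrightarrow> rho0 q \<sigma> f = (\<lambda>m. f m * lam q \<sigma> m)"
  unfolding rho0_def linext_def Vsp_def bv_def
  by (rule ext) (auto simp: if_distrib cong: if_cong)

lemma rho0_invariant_mult_prod:
  assumes ls: "lin_subspace W" and sub: "W \<subseteq> Vsp (ordD q)"
    and inv: "\<forall>f\<in>W. rho0 q \<sigma> f \<in> W" and f: "f \<in> W" and K: "finite K"
  shows "(\<lambda>m. f m * (\<Prod>k\<in>K. lam q \<sigma> m - lam q \<sigma> k)) \<in> W"
  using K
proof induct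
  case empty
  then show ?case using f by simp
next
  case (insert x F)
  define g where "g = (\<lambda>m. f m * (\<Prod>k\<in>F. lam q \<sigma> m - lam q \<sigma> k))"
  have g: "g \<in> W" using insert by (simp add: g_def)
  then have "rho0 q \<sigma> g \<in> W" using inv by blast
  then have "(\<lambda>m. g m * lam q \<sigma> m) \<in> W" using g sub rho0_apply by auto
  then have "(\<lambda>m. g m * lam q \<sigma> m + (- lam q \<sigma> x) * g m) \<in> W"
    using lin_subspace_add[OF ls] lin_subspace_smult[OF ls g] by blast
  moreover have "g m * lam q \<sigma> m + (- lam q \<sigma> x) * g m
      = f m * (\<Prod>k\<in>insert x F. lam q \<sigma> m - lam q \<sigma> k)" for m
    using insert by (simp add: g_def algebra_simps)
  ultimately show ?case by simp
qed

lemma bv_mem_rho0_invariant: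
  assumes ls: "lin_subspace W" and sub: "W \<subseteq> Vsp (ordD q)"
    and inv: "\<forall>f\<in>W. rho0 q \<sigma> f \<in> W" and inj: "inj_on (lam q \<sigma>) {..<ordD q}"
    and f: "f \<in> W" "f j \<noteq> 0"
  shows "bv j \<in> W"
proof -
  let ?D = "ordD q"
  have j: "j < ?D"
  proof (rule ccontr)
    assume "\<not> j < ?D"
    then have "f j = 0" using f(1) sub by (auto simp: Vsp_def)
    with f(2) show False ..
  qed
  \<comment> \<open>the product of the \<open>\<rho>(\<alpha>\<^sub>0) - \<lambda>\<^sub>k\<close> over \<open>k \<noteq> j\<close> kills every coordinate of \<open>f\<close> but the \<open>j\<close>-th\<close>
  define K where "K = {..<?D} - {j}"
  define h where "h = (\<lambda>m. f m * (\<Prod>k\<in>K. lam q \<sigma> m - lam q \<sigma> k))"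
  have h: "h \<in> W" unfolding h_def using rho0_invariant_mult_prod[OF ls sub inv f(1)] by (simp add: K_def)
  have "\<forall>k\<in>K. lam q \<sigma> j - lam q \<sigma> k \<noteq> 0"
    using inj j unfolding inj_on_def K_def by auto
  then have "(\<Prod>k\<in>K. lam q \<sigma> j - lam q \<sigma> k) \<noteq> 0"
    by (subst prod_zero_iff) (auto simp: K_def)
  then have c: "h j \<noteq> 0" using f(2) by (simp add: h_def)
  have "h m = 0" if "m \<noteq> j" for m
  proof (cases "m < ?D")
    case True
    then have "m \<in> K" using that by (simp add: K_def)
    then have "(\<Prod>k\<in>K. lam q \<sigma> m - lam q \<sigma> k) = 0"
      by (intro prod_zero) (auto simp: K_def)
    then show ?thesis by (simp add: h_def)
  next
    case False
    then have "f m = 0" using f sub unfolding Vsp_def by auto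
    then show ?thesis by (simp add: h_def)
  qed
  then have "bv j = (\<lambda>m. inverse (h j) * h m)"
    using c by (intro ext) (simp add: bv_def)
  then show ?thesis using lin_subspace_smult[OF ls h] by simp
qed

lemma rho0_invariant_eq_coord_subspace:
  assumes ls: "lin_subspace W" and sub: "W \<subseteq> Vsp (ordD q)"
    and inv: "\<forall>f\<in>W. rho0 q \<sigma> f \<in> W" and inj: "inj_on (lam q \<sigma>) {..<ordD q}"
  shows "W = coord_subspace (ordD q) {i. bv i \<in> W}"
proof
  show "coord_subspace (ordD q) {i. bv i \<in> W} \<subseteq> W"
    by (rule coord_subspace_subset[OF ls]) simp
  show "W \<subseteq> coord_subspace (ordD q) {i. bv i \<in> W}"
  proof
    fix f assume "f \<in> W"
    then have "f m = 0" if "bv m \<notin> W" for m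
      using bv_mem_rho0_invariant[OF ls sub inv inj] that by blast
    moreover have "f \<in> Vsp (ordD q)" using \<open>f \<in> W\<close> sub by blast
    ultimately show "f \<in> coord_subspace (ordD q) {i. bv i \<in> W}"
      unfolding coord_subspace_def by blast
  qed
qed

lemma linext_mem_coord_subspace:
  assumes f: "f \<in> coord_subspace D S"
    and img: "\<And>i. i \<in> S \<Longrightarrow> i < D \<Longrightarrow> img i \<in> coord_subspace D S"
  shows "linext D img f \<in> coord_subspace D S"
proof -
  have "(\<Sum>i<D. f i * img i j) = (\<Sum>i\<in>{..<D} \<inter> S. f i * img i j)" for j
    using f by (intro sum.mono_neutral_right) (auto simp: coord_subspace_def)
  then have "linext D img f = (\<lambda>j. \<Sum>i\<in>{..<D} \<inter> S. f i * img i j)"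
    by (simp add: linext_def)
  also have "\<dots> \<in> coord_subspace D S"
    using img by (intro lin_subspace_sum lin_subspace_coord_subspace) auto
  finally show ?thesis .
qed

lemma coord_subspace_invariant:
  assumes D: "0 < ordD q"
    and closed_nxt: "\<And>i. i \<in> S \<Longrightarrow> s i \<noteq> 0 \<Longrightarrow> nxt (ordD q) i \<in> S"
    and closed_prv: "\<And>i. i \<in> S \<Longrightarrow> t (prv (ordD q) i) \<noteq> 0 \<Longrightarrow> prv (ordD q) i \<in> S"
    and f: "f \<in> coord_subspace (ordD q) S"
  shows "rho0 q \<sigma> f \<in> coord_subspace (ordD q) S"
    and "rho1 q \<sigma> s t f \<in> coord_subspace (ordD q) S"
    and "rhoinf q s t f \<in> coord_subspace (ordD q) S"
proof -
  let ?D = "ordD q" and ?C = "coord_subspace (ordD q) S"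
  have nxt_term: "(\<lambda>j. c * bv (nxt ?D i) j) \<in> ?C" if "i \<in> S" "s i = 0 \<Longrightarrow> c = 0" for i c
    using closed_nxt[OF that(1)] that(2) nxt_less[OF D] by (intro smult_bv_mem_coord_subspace) auto
  have prv_term: "(\<lambda>j. c * bv (prv ?D i) j) \<in> ?C" if "i \<in> S" "t (prv ?D i) = 0 \<Longrightarrow> c = 0" for i c
    using closed_prv[OF that(1)] that(2) prv_less[OF D] by (intro smult_bv_mem_coord_subspace) auto
  note add = lin_subspace_add[OF lin_subspace_coord_subspace]
  show "rho0 q \<sigma> f \<in> ?C"
    unfolding rho0_def using f by (intro linext_mem_coord_subspace smult_bv_mem_coord_subspace) auto
  show "rho1 q \<sigma> s t f \<in> ?C"
    unfolding rho1_def using f by (intro linext_mem_coord_subspace add nxt_term prv_term) auto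
  show "rhoinf q s t f \<in> ?C"
    unfolding rhoinf_def using f by (intro linext_mem_coord_subspace add nxt_term prv_term) auto
qed

lemma reducible_type0_of_closed_index_set:
  assumes D: "0 < ordD q"
    and closed_nxt: "\<And>i. i \<in> S \<Longrightarrow> s i \<noteq> 0 \<Longrightarrow> nxt (ordD q) i \<in> S"
    and closed_prv: "\<And>i. i \<in> S \<Longrightarrow> t (prv (ordD q) i) \<noteq> 0 \<Longrightarrow> prv (ordD q) i \<in> S"
    and a: "a \<in> S" "a < ordD q" and b: "b \<notin> S" "b < ordD q"
  shows "reducible_type0 q \<sigma> s t"
  unfolding reducible_type0_def
proof (intro exI conjI)
  let ?W = "coord_subspace (ordD q) S"
  show "lin_subspace ?W" by (rule lin_subspace_coord_subspace)
  show "?W \<subseteq> Vsp (ordD q)" unfolding coord_subspace_def by auto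
  have "bv a \<in> ?W" using a by (rule bv_mem_coord_subspace)
  moreover have "bv a \<noteq> (\<lambda>_. 0)" unfolding bv_def by (metis one_neq_zero)
  ultimately show "?W \<noteq> {\<lambda>_. 0}" by auto
  have "bv b \<in> Vsp (ordD q)" using b(2) by (simp add: bv_mem_Vsp_iff)
  moreover have "bv b \<notin> ?W" using b(1) by (simp add: coord_subspace_def bv_def)
  ultimately show "?W \<noteq> Vsp (ordD q)" by auto
  show "\<forall>f\<in>?W. rho0 q \<sigma> f \<in> ?W \<and> rho1 q \<sigma> s t f \<in> ?W \<and> rhoinf q s t f \<in> ?W"
    using coord_subspace_invariant[OF D closed_nxt closed_prv] by blast
qed

lemma cyclic_interval_closed:
  fixes D a b :: nat
  assumes D0: "0 < D" and a: "a < D" and b: "b < D" and ab: "a \<noteq> b"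
  defines "S \<equiv> {m. m < D \<and> (m + (D - Suc b)) mod D \<le> (a + (D - Suc b)) mod D}"
  shows "a \<in> S" and "b \<notin> S"
    and "\<And>i. i \<in> S \<Longrightarrow> i \<noteq> a \<Longrightarrow> nxt D i \<in> S"
    and "\<And>i. i \<in> S \<Longrightarrow> prv D i \<noteq> b \<Longrightarrow> prv D i \<in> S"
proof -
  define c where "c = D - Suc b"
  \<comment> \<open>\<open>d m\<close> is the position of \<open>m\<close> when \<open>\<int>/D\<close> is traversed starting from \<open>b + 1\<close>\<close>
  define d where "d = (\<lambda>m. (m + c) mod D)"
  have S: "S = {m. m < D \<and> d m \<le> d a}" by (simp add: S_def d_def c_def)
  have cD: "c < D" using D0 by (simp add: c_def)
  have d_less: "d m < D" for m using D0 by (simp add: d_def)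
  have d_b: "d b = D - 1" unfolding d_def c_def using b by simp
  have d_inj: "i = j" if "i < D" "j < D" "d i = d j" for i j
  proof -
    have "(i + c) mod D = (if i + c < D then i + c else i + c - D)"
      "(j + c) mod D = (if j + c < D then j + c else j + c - D)"
      using that cD by (intro mod_eq_if_less_double; simp)+
    then show ?thesis using that cD unfolding d_def by (auto split: if_splits)
  qed
  have d_nxt: "d (nxt D i) = (d i + 1) mod D" for i
    unfolding d_def nxt_def by (simp add: mod_simps add_ac)
  have d_prv: "d (prv D i) = (d i + (D - 1)) mod D" for i
  proof -
    have "i + D - 1 = i + (D - 1)" using D0 by simp
    then show ?thesis unfolding d_def prv_def by (simp add: mod_simps add_ac)
  qed
  have d_a: "d a < D - 1"
    using d_inj[OF a b] ab d_less[of a] d_b by fastforce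
  show "a \<in> S" using a by (simp add: S)
  show "b \<notin> S" using d_a d_b by (simp add: S)
  show "nxt D i \<in> S" if i: "i \<in> S" "i \<noteq> a" for i
  proof -
    have "d i < d a" using i d_inj[OF _ a] by (force simp: S)
    then have "d (nxt D i) = d i + 1" using d_nxt[of i] d_a by simp
    then show ?thesis using \<open>d i < d a\<close> nxt_less[OF D0, of i] by (simp add: S)
  qed
  show "prv D i \<in> S" if i: "i \<in> S" "prv D i \<noteq> b" for i
  proof -
    have "d i = 0 \<Longrightarrow> d (prv D i) = d b"
      using d_prv[of i] d_b D0 by simp
    then have "d i \<noteq> 0"
      using i(2) d_inj[OF prv_less[OF D0] b] by blast
    then have "d (prv D i) = d i - 1"
      using d_prv[of i] d_less[of i] mod_eq_if_less_double[of "d i + (D - 1)" D] by simp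
    then show ?thesis using i(1) prv_less[OF D0] by (auto simp: S)
  qed
qed

lemma reducible_type0_of_zeros:
  assumes D: "0 < ordD q" and ab: "a < ordD q" "b < ordD q" "a \<noteq> b"
    and zeros: "s a = 0" "t b = 0"
  shows "reducible_type0 q \<sigma> s t"
proof -
  note interval = cyclic_interval_closed[OF D ab]
  show ?thesis
    by (rule reducible_type0_of_closed_index_set[OF D _ _ interval(1) ab(1) interval(2) ab(2)])
      (use zeros interval(3,4) in fastforce)+
qed

lemma linext_bv:
  assumes "i < D"
  shows "linext D img (bv i) = img i"
proof
  fix j
  have "(\<Sum>k<D. bv i k * img k j) = (\<Sum>k<D. if k = i then img i j else 0)"
    by (rule sum.cong) (auto simp: bv_def)
  then show "linext D img (bv i) j = img i j" using assms by (simp add: linext_def)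
qed

lemma rhoinf_bv_nxt:
  assumes "3 \<le> ordD q" "k < ordD q"
  shows "rhoinf q s t (bv k) (nxt (ordD q) k) = s k"
  unfolding rhoinf_def linext_bv[OF assms(2)] using nxt_neq_prv[OF assms] by (simp add: bv_def)

lemma rhoinf_bv_prv:
  assumes "3 \<le> ordD q" "k < ordD q"
  shows "rhoinf q s t (bv k) (prv (ordD q) k) = t (prv (ordD q) k)"
  unfolding rhoinf_def linext_bv[OF assms(2)] using nxt_neq_prv[OF assms] by (simp add: bv_def)

lemma zeros_of_reducible_type0:
  assumes D: "3 \<le> ordD q" and inj: "inj_on (lam q \<sigma>) {..<ordD q}"
    and red: "reducible_type0 q \<sigma> s t"
  shows "\<exists>a<ordD q. \<exists>b<ordD q. a \<noteq> b \<and> s a = 0 \<and> t b = 0"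
proof -
  let ?D = "ordD q"
  have D0: "0 < ?D" using D by simp
  from red obtain W where ls: "lin_subspace W" and sub: "W \<subseteq> Vsp ?D"
    and nonzero: "W \<noteq> {\<lambda>_. 0}" and proper: "W \<noteq> Vsp ?D"
    and inv: "\<forall>f\<in>W. rho0 q \<sigma> f \<in> W \<and> rho1 q \<sigma> s t f \<in> W \<and> rhoinf q s t f \<in> W"
    unfolding reducible_type0_def by blast
  define S where "S = {i. bv i \<in> W}"
  have W: "W = coord_subspace ?D S"
    unfolding S_def using inv by (intro rho0_invariant_eq_coord_subspace[OF ls sub _ inj]) blast
  have S_less: "i \<in> S \<Longrightarrow> i < ?D" for i
    using sub bv_mem_Vsp_iff unfolding S_def by blast
  have mem_S: "m \<in> S" if "k \<in> S" "rhoinf q s t (bv k) m \<noteq> 0" for k m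
  proof -
    have "rhoinf q s t (bv k) \<in> W" using inv that(1) by (simp add: S_def)
    then show ?thesis using that(2) unfolding W coord_subspace_def by blast
  qed
  have "S \<noteq> {}" using nonzero W coord_subspace_empty by metis
  then obtain i where i: "i \<in> S" "i < ?D" using S_less by blast
  have "\<not> {..<?D} \<subseteq> S" using proper W coord_subspace_eq_Vsp by metis
  then obtain j where j: "j < ?D" "j \<notin> S" by auto
  obtain a where a: "a < ?D" "a \<in> S" "nxt ?D a \<notin> S"
    using exists_exit_nxt[OF i(2,1) j] by blast
  obtain b where b: "b < ?D" "b \<notin> S" "nxt ?D b \<in> S"
    using exists_exit_nxt[of j ?D "{..<?D} - S" i] i j nxt_less[OF D0] by auto
  have "s a = 0"
    using mem_S[OF a(2), of "nxt ?D a"] a(3) rhoinf_bv_nxt[OF D a(1), of s t] by auto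
  moreover have "t b = 0"
    using mem_S[OF b(3), of b] b(2) rhoinf_bv_prv[OF D nxt_less[OF D0, of b], of s t] prv_nxt[OF b(1)]
    by auto
  moreover have "a \<noteq> b" using a(2) b(2) by blast
  ultimately show ?thesis using a(1) b(1) by blast
qed

lemma exists_distinct_zeros_iff:
  fixes s t r :: "nat \<Rightarrow> 'a::idom"
  assumes "\<And>i. i < D \<Longrightarrow> s i * t i = r i"
  shows "(\<exists>a<D. \<exists>b<D. a \<noteq> b \<and> s a = 0 \<and> t b = 0)
    \<longleftrightarrow> (\<Prod>i<D. s i) = 0 \<and> (\<Prod>i<D. t i) = 0 \<and> (\<exists>i<D. \<exists>j<D. i \<noteq> j \<and> r i = 0 \<and> r j = 0)"
    (is "?zeros \<longleftrightarrow> ?prods")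
proof
  assume ?zeros
  then show ?prods using assms by force
next
  assume ?prods
  then obtain a b i j where ab: "a < D" "s a = 0" "b < D" "t b = 0"
    and ij: "i < D" "j < D" "i \<noteq> j" "r i = 0" "r j = 0"
    by auto
  show ?zeros
  proof (cases "a = b")
    case False
    then show ?thesis using ab by blast
  next
    case True
    \<comment> \<open>one of the two zeros of \<open>r\<close> sits at some \<open>k \<noteq> a\<close>, and \<open>s\<^sub>k t\<^sub>k = 0\<close> there\<close>
    obtain k where k: "k < D" "k \<noteq> a" "s k = 0 \<or> t k = 0"
      using ij assms by (metis mult_eq_0_iff)
    then show ?thesis using ab True by blast
  qed
qed

theorem mainTheorem9:
  fixes q \<sigma> w :: complex and s t :: "nat \<Rightarrow> complex"
  assumes "root_of_unity q" and "q ^ 4 \<noteq> 1"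
    and "\<sigma> \<noteq> 0" and "general q \<sigma>"
    and "inE0 q \<sigma> w s t"
  shows "((\<Prod>i<ordD q. s i) = 0 \<and> (\<Prod>i<ordD q. t i) = 0
           \<and> (\<exists>i<ordD q. \<exists>j<ordD q. i \<noteq> j \<and> rr q \<sigma> w i = 0 \<and> rr q \<sigma> w j = 0)
          \<longrightarrow> reducible_type0 q \<sigma> s t)
       \<and> (z0 q \<sigma> \<noteq> 2 \<and> z0 q \<sigma> \<noteq> -2 \<longrightarrow> reducible_type0 q \<sigma> s t \<longrightarrow>
           (\<Prod>i<ordD q. s i) = 0 \<and> (\<Prod>i<ordD q. t i) = 0
           \<and> (\<exists>i<ordD q. \<exists>j<ordD q. i \<noteq> j \<and> rr q \<sigma> w i = 0 \<and> rr q \<sigma> w j = 0))"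
    (is "(?cond \<longrightarrow> _) \<and> _")
proof -
  have D: "3 \<le> ordD q" using assms(1,2) by (rule three_le_ordD)
  have zeros_iff: "(\<exists>a<ordD q. \<exists>b<ordD q. a \<noteq> b \<and> s a = 0 \<and> t b = 0) \<longleftrightarrow> ?cond"
    using assms(5) unfolding inE0_def by (intro exists_distinct_zeros_iff) auto
  show ?thesis
  proof (intro conjI[OF impI impI] impI)
    assume ?cond
    then show "reducible_type0 q \<sigma> s t"
      using zeros_iff reducible_type0_of_zeros[of q] D by auto
  next
    assume "z0 q \<sigma> \<noteq> 2 \<and> z0 q \<sigma> \<noteq> -2" and "reducible_type0 q \<sigma> s t"
    then show ?cond
      using zeros_iff zeros_of_reducible_type0[OF D lam_inj_on[OF assms(1,3)]] by blast
  qed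
qed

end
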